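(* Let $(X,d)$ be a separable metric space, $T\colon X\to X$ a Borel measurable map, $(s_n)_{n\ge1}$ a steady scale sequence, and $\mu,\nu$ two $T$-invariant $T$-ergodic Borel probability measures on $X$. Assume $T$ is a local contraction mod $\nu$. Then $\phi(x,y)=\liminf_{n\to\infty}s_n\,d(T^nx,y)$ is $\mu\times\nu$-almost everywhere constant.
   Context: A scale sequence is a sequence of positive reals $s_n\to\infty$; it is steady if $s_{n+1}/s_n\to1$. The dilation gauge is $D_T(x)=\limsup_{y\to x} d(Ty,Tx)/d(y,x)$ if $x$ is a limit point of $X$ and $D_T(x)=0$ if $x$ is isolated; $T$ is a local contraction mod $\nu$ if $D_T\le1$ $\nu$-a.e. *)

theory Defs
  imports "HOL-Probability.Probability"
begin

definition scale_sequence :: "(nat \<Rightarrow> real) \<Rightarrow> bool" where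
  "scale_sequence s \<longleftrightarrow> (\<forall>n. s n > 0) \<and> filterlim s at_top sequentially"

definition steady :: "(nat \<Rightarrow> real) \<Rightarrow> bool" where
  "steady s \<longleftrightarrow> ((\<lambda>n. s (Suc n) / s n) \<longlonglongrightarrow> 1)"

definition invariant_measure :: "('a::topological_space \<Rightarrow> 'a) \<Rightarrow> 'a measure \<Rightarrow> bool" where
  "invariant_measure T M \<longleftrightarrow> sets M = sets borel \<and> T \<in> borel_measurable M \<and>
     (\<forall>A \<in> sets borel. measure M (T -` A) = measure M A)"

definition ergodic_measure :: "('a::topological_space \<Rightarrow> 'a) \<Rightarrow> 'a measure \<Rightarrow> bool" where
  "ergodic_measure T M \<longleftrightarrow>
     (\<forall>A \<in> sets borel. T -` A = A \<longrightarrow> measure M A = 0 \<or> measure M A = 1)"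

definition dilation_gauge :: "('a::metric_space \<Rightarrow> 'a) \<Rightarrow> 'a \<Rightarrow> ereal" where
  "dilation_gauge T x =
     (if x islimpt UNIV
      then Limsup (at x) (\<lambda>y. ereal (dist (T y) (T x) / dist y x))
      else 0)"

definition local_contraction_mod :: "('a::metric_space \<Rightarrow> 'a) \<Rightarrow> 'a measure \<Rightarrow> bool" where
  "local_contraction_mod T N \<longleftrightarrow> (AE x in N. dilation_gauge T x \<le> 1)"

end

theory Submission
  imports Defs
begin

text \<open>
  Shifting \<open>x\<close> along its orbit changes \<open>\<phi>(x, y)\<close> only by the factors \<open>s\<^sub>n / s\<^sub>n\<^sub>+\<^sub>1 \<rightarrow> 1\<close>, so
  \<open>\<phi>(T x, y) = \<phi>(x, y)\<close> and every sublevel set \<open>{x. \<phi>(x, y) < r}\<close> is \<open>\<mu>\<close>-trivial. At a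
  point \<open>y\<close> with \<open>D\<^sub>T(y) \<le> 1\<close> the map \<open>T\<close> is locally \<open>m\<close>-Lipschitz for every \<open>m > 1\<close>;
  since \<open>s\<^sub>n d(T\<^sup>n x, y) < r\<close> forces \<open>d(T\<^sup>n x, y) \<rightarrow> 0\<close> along those \<open>n\<close>, this gives
  \<open>\<phi>(x, T y) \<le> \<phi>(x, y)\<close>. Hence the set of \<open>y\<close> whose section is \<open>\<mu>\<close>-full is
  \<open>\<nu>\<close>-almost forward invariant, and so \<open>\<nu>\<close>-trivial by ergodicity. By Fubini each
  sublevel set of \<open>\<phi>\<close> is \<open>\<mu> \<times> \<nu>\<close>-trivial, and a function all of whose rational
  sublevel sets are trivial is almost everywhere constant.
\<close>

lemma liminf_le_if_frequently_less:
  fixes f :: "nat \<Rightarrow> ereal"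
  assumes "\<exists>\<^sub>F n in sequentially. f n < c"
  shows "liminf f \<le> c"
proof (rule ccontr)
  assume "\<not> liminf f \<le> c"
  then have "\<forall>\<^sub>F n in sequentially. c < f n"
    by (intro less_LiminfD) simp
  with assms show False
    by (simp add: frequently_def eventually_mono)
qed

lemma frequently_less_if_liminf_less:
  fixes f :: "nat \<Rightarrow> ereal"
  assumes "liminf f < c"
  shows "\<exists>\<^sub>F n in sequentially. f n < c"
proof -
  obtain y where "y < c" and "\<not> (\<forall>\<^sub>F n in sequentially. y < f n)"
    using assms le_Liminf_iff[of c sequentially f] by auto
  show ?thesis
  proof (rule ccontr)
    assume "\<not> (\<exists>\<^sub>F n in sequentially. f n < c)"
    then have "\<forall>\<^sub>F n in sequentially. c \<le> f n"
      by (simp add: not_frequently not_less)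
    then have "\<forall>\<^sub>F n in sequentially. y < f n"
      by (rule eventually_mono) (use \<open>y < c\<close> in auto)
    with \<open>\<not> (\<forall>\<^sub>F n in sequentially. y < f n)\<close> show False ..
  qed
qed

lemma liminf_steady_scaled_Suc:
  fixes s e :: "nat \<Rightarrow> real"
  assumes "scale_sequence s" and "steady s"
  shows "liminf (\<lambda>n. ereal (s n * e (Suc n))) = liminf (\<lambda>n. ereal (s n * e n))"
proof -
  have pos: "s n > 0" for n
    using assms(1) by (simp add: scale_sequence_def)
  have "(\<lambda>n. s n / s (Suc n)) \<longlonglongrightarrow> 1 / 1"
    using assms(2) tendsto_inverse[of "\<lambda>n. s (Suc n) / s n" 1 sequentially]
    by (simp add: steady_def inverse_eq_divide)
  then have ratio: "(\<lambda>n. ereal (s n / s (Suc n))) \<longlonglongrightarrow> 1"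
    by (simp add: one_ereal_def)
  have "ereal (s n * e (Suc n)) = ereal (s n / s (Suc n)) * ereal (s (Suc n) * e (Suc n))" for n
    using pos[of "Suc n"] by simp
  then have "liminf (\<lambda>n. ereal (s n * e (Suc n)))
      = liminf (\<lambda>n. ereal (s n / s (Suc n)) * ereal (s (Suc n) * e (Suc n)))"
    by presburger
  also have "\<dots> = 1 * liminf (\<lambda>n. ereal (s (Suc n) * e (Suc n)))"
    by (rule ereal_liminf_lim_mult[OF ratio]) simp_all
  also have "\<dots> = liminf (\<lambda>n. ereal (s n * e n))"
    using liminf_shift[of "\<lambda>n. ereal (s n * e n)"] by simp
  finally show ?thesis .
qed

definition orbit_approach :: "('a::metric_space \<Rightarrow> 'a) \<Rightarrow> (nat \<Rightarrow> real) \<Rightarrow> 'a \<Rightarrow> 'a \<Rightarrow> ereal"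
  where "orbit_approach T s x y = liminf (\<lambda>n. ereal (s n * dist ((T ^^ n) x) y))"

lemma orbit_approach_nonneg:
  assumes "scale_sequence s"
  shows "0 \<le> orbit_approach T s x y"
  unfolding orbit_approach_def
  using assms by (intro Liminf_bounded always_eventually allI)
    (auto simp: scale_sequence_def less_imp_le)

lemma orbit_approach_apply:
  assumes "scale_sequence s" and "steady s"
  shows "orbit_approach T s (T x) y = orbit_approach T s x y"
  using liminf_steady_scaled_Suc[OF assms, of "\<lambda>n. dist ((T ^^ n) x) y"]
  by (simp add: orbit_approach_def funpow_Suc_right del: funpow.simps)

lemma dilation_gauge_le_imp_locally_lipschitz:
  fixes T :: "'a::metric_space \<Rightarrow> 'a"
  assumes "dilation_gauge T y \<le> 1" and "1 < m"
  obtains \<eta> where "0 < \<eta>" and "\<And>z. dist z y < \<eta> \<Longrightarrow> dist (T z) (T y) \<le> m * dist z y"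
proof (cases "y islimpt UNIV")
  case True
  then have "Limsup (at y) (\<lambda>z. ereal (dist (T z) (T y) / dist z y)) < ereal m"
    using assms unfolding dilation_gauge_def by (simp add: order.strict_trans1)
  then have "\<forall>\<^sub>F z in at y. dist (T z) (T y) / dist z y < m"
    by (auto dest: Limsup_lessD)
  then obtain \<eta> where "0 < \<eta>" and \<eta>: "\<And>z. z \<noteq> y \<Longrightarrow> dist z y < \<eta> \<Longrightarrow> dist (T z) (T y) / dist z y < m"
    unfolding eventually_at by auto
  show ?thesis
  proof (rule that[OF \<open>0 < \<eta>\<close>])
    fix z assume "dist z y < \<eta>"
    then show "dist (T z) (T y) \<le> m * dist z y"
      using \<eta>[of z] by (cases "z = y") (auto simp: divide_less_eq)
  qed
next
  case False
  then obtain \<eta> where "0 < \<eta>" and \<eta>: "\<And>z. z \<noteq> y \<Longrightarrow> \<not> dist z y < \<eta>"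
    unfolding islimpt_approachable by auto
  show ?thesis
  proof (rule that[OF \<open>0 < \<eta>\<close>])
    fix z assume "dist z y < \<eta>"
    then have "z = y"
      using \<eta> by blast
    then show "dist (T z) (T y) \<le> m * dist z y"
      by simp
  qed
qed

lemma orbit_approach_le_scaled_if_locally_lipschitz:
  fixes T :: "'a::metric_space \<Rightarrow> 'a"
  assumes s: "scale_sequence s" "steady s"
    and "0 < \<eta>" and lip: "\<And>z. dist z y < \<eta> \<Longrightarrow> dist (T z) (T y) \<le> m * dist z y"
    and "0 < m" and "orbit_approach T s x y < ereal r"
  shows "orbit_approach T s x (T y) \<le> ereal (m * r)"
proof -
  define d where "d n = dist ((T ^^ n) x) y" for n
  have pos: "s n > 0" for n
    using s(1) by (simp add: scale_sequence_def)
  have "\<exists>\<^sub>F n in sequentially. s n * d n < r"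
    using frequently_less_if_liminf_less assms(6) unfolding orbit_approach_def d_def by fastforce
  moreover have "\<forall>\<^sub>F n in sequentially. r / \<eta> < s n"
    using s(1) by (simp add: scale_sequence_def filterlim_at_top_dense)
  ultimately have "\<exists>\<^sub>F n in sequentially. s n * dist ((T ^^ Suc n) x) (T y) < m * r"
  proof (rule frequently_eventually_frequently[THEN frequently_elim1], safe)
    fix n assume n: "s n * d n < r" "r / \<eta> < s n"
    have "r < s n * \<eta>"
      using n(2) \<open>0 < \<eta>\<close> by (simp add: field_simps)
    with n(1) have "s n * d n < s n * \<eta>"
      by linarith
    then have "d n < \<eta>"
      using pos[of n] by simp
    then have "s n * dist ((T ^^ Suc n) x) (T y) \<le> m * (s n * d n)"
      using lip pos[of n] mult_left_mono by (fastforce simp: d_def)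
    also have "\<dots> < m * r"
      using n(1) \<open>0 < m\<close> by simp
    finally show "s n * dist ((T ^^ Suc n) x) (T y) < m * r" .
  qed
  then have "liminf (\<lambda>n. ereal (s n * dist ((T ^^ Suc n) x) (T y))) \<le> ereal (m * r)"
    by (intro liminf_le_if_frequently_less) simp
  then show ?thesis
    using liminf_steady_scaled_Suc[OF s, of "\<lambda>n. dist ((T ^^ n) x) (T y)"]
    by (simp add: orbit_approach_def)
qed

lemma orbit_approach_image_le:
  fixes T :: "'a::metric_space \<Rightarrow> 'a"
  assumes s: "scale_sequence s" "steady s" and "dilation_gauge T y \<le> 1"
  shows "orbit_approach T s x (T y) \<le> orbit_approach T s x y"
proof (rule dense_ge)
  fix w assume "orbit_approach T s x y < w"
  then obtain r where r: "orbit_approach T s x y < ereal r" "ereal r < w"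
    using ereal_dense2 by blast
  then have "0 < r"
    using orbit_approach_nonneg[OF s(1)] by (metis ereal_less(2) order.strict_trans1)
  show "orbit_approach T s x (T y) \<le> w"
  proof (cases w)
    case (real t)
    with r \<open>0 < r\<close> have "1 < t / r"
      by simp
    then obtain \<eta> where "0 < \<eta>" "\<And>z. dist z y < \<eta> \<Longrightarrow> dist (T z) (T y) \<le> t / r * dist z y"
      using dilation_gauge_le_imp_locally_lipschitz assms(3) by metis
    from orbit_approach_le_scaled_if_locally_lipschitz[OF s this _ r(1)]
    show ?thesis
      using real \<open>0 < r\<close> \<open>1 < t / r\<close> by simp
  qed (use r in auto)
qed

lemma borel_measurable_dist_separable:
  assumes "separable_space (euclidean :: 'a::metric_space topology)"
  shows "(\<lambda>z::'a \<times> 'a. dist (fst z) (snd z)) \<in> borel_measurable (borel \<Otimes>\<^sub>M borel)"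
proof -
  obtain C :: "'a set" where C: "countable C" "closure C = UNIV"
    using assms unfolding separable_space_def by auto
  text \<open>Separability replaces joint continuity of \<open>dist\<close>, which would need the Borel sets of
    the product rather than the product of the Borel sets.\<close>
  have inf: "ereal (dist x y) = (INF q\<in>C. ereal (dist x q + dist q y))" for x y :: 'a
  proof (rule antisym)
    show "ereal (dist x y) \<le> (INF q\<in>C. ereal (dist x q + dist q y))"
      by (rule INF_greatest) (simp add: dist_triangle)
    show "(INF q\<in>C. ereal (dist x q + dist q y)) \<le> ereal (dist x y)"
    proof (rule ereal_le_epsilon2)
      fix e :: real assume "0 < e"
      then obtain q where "q \<in> C" "dist q x < e / 2"
        using C(2) closure_approachable[of x C] by (metis UNIV_I half_gt_zero)
      moreover have "dist q y \<le> dist q x + dist x y"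
        by (rule dist_triangle)
      ultimately have "ereal (dist x q + dist q y) \<le> ereal (dist x y) + ereal e"
        by (simp add: dist_commute)
      then show "(INF q\<in>C. ereal (dist x q + dist q y)) \<le> ereal (dist x y) + ereal e"
        using \<open>q \<in> C\<close> by (meson INF_lower order.trans)
    qed
  qed
  have [measurable]: "(\<lambda>a. dist a q) \<in> borel_measurable borel" "(\<lambda>a. dist q a) \<in> borel_measurable borel"
    for q :: 'a
    by (intro borel_measurable_continuous_onI continuous_intros)+
  have "(\<lambda>z::'a \<times> 'a. real_of_ereal (INF q\<in>C. ereal (dist (fst z) q + dist q (snd z))))
      \<in> borel_measurable (borel \<Otimes>\<^sub>M borel)"
    using C(1) by measurable
  then show ?thesis
    by (simp flip: inf)
qed

lemma borel_measurable_orbit_approach: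
  fixes T :: "'a::metric_space \<Rightarrow> 'a"
  assumes "separable_space (euclidean :: 'a topology)" and "T \<in> borel_measurable borel"
  shows "(\<lambda>z. orbit_approach T s (fst z) (snd z)) \<in> borel_measurable (borel \<Otimes>\<^sub>M borel)"
proof -
  have [measurable]:
    "(\<lambda>z::'a \<times> 'a. dist ((T ^^ n) (fst z)) (snd z)) \<in> borel_measurable (borel \<Otimes>\<^sub>M borel)" for n
  proof -
    have "(\<lambda>z::'a \<times> 'a. ((T ^^ n) (fst z), snd z)) \<in> measurable (borel \<Otimes>\<^sub>M borel) (borel \<Otimes>\<^sub>M borel)"
      using measurable_compose_n[OF assms(2)] by measurable
    from measurable_compose[OF this borel_measurable_dist_separable[OF assms(1)]]
    show ?thesis
      by (simp add: comp_def)
  qed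
  then show ?thesis
    unfolding orbit_approach_def by measurable
qed

lemma AE_eq_const_if_AE_threshold:
  fixes g :: "'b \<Rightarrow> ereal"
  assumes "\<And>r::real. (AE z in M. g z < ereal r) \<or> (AE z in M. \<not> g z < ereal r)"
  shows "\<exists>c. AE z in M. g z = c"
proof -
  define Q where "Q r \<longleftrightarrow> (AE z in M. g z < ereal (real_of_rat r))" for r
  define c where "c = (INF r\<in>{r. Q r}. ereal (real_of_rat r))"
  have "AE z in M. g z < ereal (real_of_rat r) \<longleftrightarrow> Q r" for r
  proof (cases "Q r")
    case True
    then have "AE z in M. g z < ereal (real_of_rat r)"
      by (simp add: Q_def)
    then show ?thesis
      by (rule eventually_mono) (simp add: True)
  next
    case False
    then have "AE z in M. \<not> g z < ereal (real_of_rat r)"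
      using assms[of "real_of_rat r"] by (simp add: Q_def)
    then show ?thesis
      by (rule eventually_mono) (simp add: False)
  qed
  then have "AE z in M. \<forall>r. g z < ereal (real_of_rat r) \<longleftrightarrow> Q r"
    by (simp add: AE_all_countable)
  then have "AE z in M. g z = c"
  proof (rule eventually_mono)
    fix z assume Q: "\<forall>r. g z < ereal (real_of_rat r) \<longleftrightarrow> Q r"
    show "g z = c"
    proof (rule linorder_cases[of "g z" c])
      assume "g z < c"
      then obtain r where "g z < real_of_rat r" "real_of_rat r < c"
        using ereal_dense3 by blast
      then have "c \<le> real_of_rat r"
        using Q unfolding c_def by (auto intro: INF_lower)
      with \<open>real_of_rat r < c\<close> show ?thesis
        by simp
    next
      assume "c < g z"
      then obtain r where "c < real_of_rat r" "real_of_rat r < g z"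
        using ereal_dense3 by blast
      then show ?thesis
        using Q unfolding c_def INF_less_iff by (auto dest: less_trans)
    qed
  qed
  then show ?thesis
    by blast
qed

lemma invariant_measureD:
  assumes "invariant_measure T M"
  shows "sets M = sets borel" and "space M = UNIV" and "T \<in> borel_measurable borel"
    and "\<And>A. A \<in> sets borel \<Longrightarrow> measure M (T -` A) = measure M A"
  using assms sets_eq_imp_space_eq[of M borel]
  by (auto simp: invariant_measure_def cong: measurable_cong_sets)

lemma AE_invariant_measure_comp:
  assumes "prob_space M" and "invariant_measure T M" and "AE x in M. P x"
  shows "AE x in M. P (T x)"
proof -
  interpret prob_space M by fact
  note M = invariant_measureD[OF assms(2)]
  obtain N where N: "{x \<in> space M. \<not> P x} \<subseteq> N" "emeasure M N = 0" "N \<in> sets M"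
    using assms(3) by (rule AE_E)
  have "T -` N \<in> sets M"
    using N(3) M(1,3) by (simp add: measurable_sets_borel)
  moreover have "prob (T -` N) = 0"
    using N(2,3) M(1,4) by (simp add: emeasure_eq_measure)
  ultimately show ?thesis
    using N(1) M(2) by (intro AE_I[of _ _ "T -` N"]) (auto simp: emeasure_eq_measure)
qed

lemma ergodic_AE_dichotomy:
  assumes "prob_space M" and "invariant_measure T M" and "ergodic_measure T M"
    and "A \<in> sets borel" and "T -` A = A"
  shows "(AE x in M. x \<in> A) \<or> (AE x in M. x \<notin> A)"
proof -
  interpret prob_space M by fact
  have "A \<in> sets M"
    using invariant_measureD(1)[OF assms(2)] assms(4) by simp
  moreover have "prob A = 0 \<or> prob A = 1"
    using assms(3-5) by (simp add: ergodic_measure_def)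
  ultimately show ?thesis
    by (auto simp: prob_eq_0 prob_eq_1)
qed

lemma AE_mem_preimage_iff_if_subinvariant:
  assumes "prob_space M" and "invariant_measure T M"
    and "A \<in> sets borel" and sub: "AE x in M. x \<in> A \<longrightarrow> T x \<in> A"
  shows "AE x in M. T x \<in> A \<longleftrightarrow> x \<in> A"
proof -
  interpret prob_space M by fact
  note M = invariant_measureD[OF assms(2)]
  have sets: "A \<in> sets M" "T -` A \<in> sets M"
    using assms(3) M(1,3) by (simp_all add: measurable_sets_borel)
  text \<open>\<open>T\<close> preserves \<open>prob\<close>, so the two one-sided differences of \<open>A\<close> and \<open>T\<^sup>-\<^sup>1 A\<close> have equal mass.\<close>
  have "prob (T -` A - A) = prob (T -` A) - prob (T -` A \<inter> A)"
    using sets by (simp add: finite_measure_Diff')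
  also have "\<dots> = prob A - prob (A \<inter> T -` A)"
    using M(4)[OF assms(3)] by (simp add: Int_commute)
  also have "\<dots> = prob (A - T -` A)"
    using sets by (simp add: finite_measure_Diff')
  also have "\<dots> = 0"
    using sub sets M(2) by (subst prob_eq_0) (auto elim: eventually_mono)
  finally have "AE x in M. x \<notin> T -` A - A"
    using sets by (simp add: prob_eq_0)
  with sub show ?thesis
    by eventually_elim auto
qed

lemma AE_mem_funpow_iff_if_subinvariant:
  assumes "prob_space M" and "invariant_measure T M"
    and "A \<in> sets borel" and "AE x in M. x \<in> A \<longrightarrow> T x \<in> A"
  shows "AE x in M. \<forall>k. (T ^^ k) x \<in> A \<longleftrightarrow> x \<in> A"
proof -
  have step: "AE x in M. T x \<in> A \<longleftrightarrow> x \<in> A"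
    using AE_mem_preimage_iff_if_subinvariant[OF assms] .
  have "AE x in M. (T ^^ k) x \<in> A \<longleftrightarrow> x \<in> A" for k
  proof (induction k)
    case (Suc k)
    from AE_invariant_measure_comp[OF assms(1,2) Suc.IH] step
    show ?case
      by eventually_elim (simp add: funpow_Suc_right del: funpow.simps)
  qed simp
  then show ?thesis
    by (simp add: AE_all_countable)
qed

lemma ergodic_AE_dichotomy_subinvariant:
  assumes "prob_space M" and "invariant_measure T M" and "ergodic_measure T M"
    and "A \<in> sets borel" and "AE x in M. x \<in> A \<longrightarrow> T x \<in> A"
  shows "(AE x in M. x \<in> A) \<or> (AE x in M. x \<notin> A)"
proof -
  text \<open>The points visiting \<open>A\<close> infinitely often form a strictly invariant set that agrees
    with \<open>A\<close> almost everywhere.\<close>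
  define A' where "A' = {x. \<exists>\<^sub>F k in sequentially. (T ^^ k) x \<in> A}"
  have "A' = (\<Inter>N. \<Union>k\<in>{N..}. (T ^^ k) -` A)"
    unfolding A'_def frequently_sequentially by (auto simp: Bex_def)
  then have "A' \<in> sets borel"
    using measurable_sets_borel[OF measurable_compose_n[OF invariant_measureD(3)[OF assms(2)]] assms(4)]
    by auto
  moreover have "T -` A' = A'"
    using eventually_sequentially_Suc[of "\<lambda>k. (T ^^ k) x \<notin> A" for x]
    by (auto simp: A'_def frequently_def funpow_Suc_right simp del: funpow.simps)
  ultimately have "(AE x in M. x \<in> A') \<or> (AE x in M. x \<notin> A')"
    by (rule ergodic_AE_dichotomy[OF assms(1-3)])
  moreover have same: "AE x in M. x \<in> A' \<longleftrightarrow> x \<in> A"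
    using AE_mem_funpow_iff_if_subinvariant[OF assms(1,2,4,5)] by eventually_elim (simp add: A'_def)
  ultimately show ?thesis
  proof (elim disjE)
    assume "AE x in M. x \<in> A'"
    with same show ?thesis
      by (intro disjI1) (elim AE_mp, simp)
  next
    assume "AE x in M. x \<notin> A'"
    with same show ?thesis
      by (intro disjI2) (elim AE_mp, simp)
  qed
qed

lemma (in pair_prob_space) sets_AE_section:
  assumes "E \<in> sets (M1 \<Otimes>\<^sub>M M2)"
  shows "{y \<in> space M2. AE x in M1. (x, y) \<in> E} \<in> sets M2"
proof -
  have "(AE x in M1. (x, y) \<in> E) \<longleftrightarrow> emeasure M1 ((\<lambda>x. (x, y)) -` E) = 1" for y
    using M1.prob_eq_1[OF sets_Pair2[OF assms]] sets_Pair2[OF assms]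
    by (simp add: M1.emeasure_eq_measure)
  then have "{y \<in> space M2. AE x in M1. (x, y) \<in> E}
      = (\<lambda>y. emeasure M1 ((\<lambda>x. (x, y)) -` E)) -` {1} \<inter> space M2"
    by auto
  also have "\<dots> \<in> sets M2"
    by (rule measurable_sets[OF measurable_emeasure_Pair2[OF assms]]) simp
  finally show ?thesis .
qed

lemma (in pair_prob_space) AE_pair_dichotomy:
  assumes E: "E \<in> sets (M1 \<Otimes>\<^sub>M M2)"
    and "(AE y in M2. AE x in M1. (x, y) \<in> E) \<or> (AE y in M2. AE x in M1. (x, y) \<notin> E)"
  shows "(AE z in M1 \<Otimes>\<^sub>M M2. z \<in> E) \<or> (AE z in M1 \<Otimes>\<^sub>M M2. z \<notin> E)"
proof -
  have in_E: "{z \<in> space (M1 \<Otimes>\<^sub>M M2). (fst z, snd z) \<in> E} \<in> sets (M1 \<Otimes>\<^sub>M M2)"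
    and not_in_E: "{z \<in> space (M1 \<Otimes>\<^sub>M M2). (fst z, snd z) \<notin> E} \<in> sets (M1 \<Otimes>\<^sub>M M2)"
    using E by measurable
  from assms(2) show ?thesis
    unfolding AE_commute[OF in_E, symmetric] AE_commute[OF not_in_E, symmetric]
      AE_pair_iff[OF in_E] AE_pair_iff[OF not_in_E]
    by simp
qed

lemma orbit_approach_AE_threshold:
  fixes T :: "'a::metric_space \<Rightarrow> 'a"
  assumes "separable_space (euclidean :: 'a topology)" and "T \<in> borel_measurable borel"
    and s: "scale_sequence s" "steady s"
    and "prob_space \<mu>" and "prob_space \<nu>"
    and \<mu>: "invariant_measure T \<mu>" "ergodic_measure T \<mu>"
    and \<nu>: "invariant_measure T \<nu>" "ergodic_measure T \<nu>"
    and "local_contraction_mod T \<nu>"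
  shows "(AE z in \<mu> \<Otimes>\<^sub>M \<nu>. orbit_approach T s (fst z) (snd z) < ereal r)
    \<or> (AE z in \<mu> \<Otimes>\<^sub>M \<nu>. \<not> orbit_approach T s (fst z) (snd z) < ereal r)"
proof -
  interpret pair_prob_space \<mu> \<nu>
    using assms(5,6) by (simp add: pair_prob_space_def pair_sigma_finite_def prob_space_imp_sigma_finite)
  define E where "E = {z. orbit_approach T s (fst z) (snd z) < ereal r}"
  have sets_\<mu>: "sets \<mu> = sets borel" and sets_\<nu>: "sets \<nu> = sets borel" and "space \<nu> = UNIV"
    using invariant_measureD[OF \<mu>(1)] invariant_measureD[OF \<nu>(1)] by simp_all
  have E: "E \<in> sets (\<mu> \<Otimes>\<^sub>M \<nu>)"
    using measurable_sets[OF borel_measurable_orbit_approach[OF assms(1,2)], of "{..<ereal r}"]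
    by (simp add: E_def vimage_def space_pair_measure sets_pair_measure_cong[OF sets_\<mu> sets_\<nu>])
  have sections: "(AE x in \<mu>. (x, y) \<in> E) \<or> (AE x in \<mu>. (x, y) \<notin> E)" for y
  proof -
    have "(\<lambda>x. (x, y)) -` E \<in> sets borel"
      using sets_Pair2[OF E] sets_\<mu> by simp
    moreover have "T -` ((\<lambda>x. (x, y)) -` E) = (\<lambda>x. (x, y)) -` E"
      using orbit_approach_apply[OF s, of T] by (auto simp: E_def)
    ultimately have "(AE x in \<mu>. x \<in> (\<lambda>x. (x, y)) -` E) \<or> (AE x in \<mu>. x \<notin> (\<lambda>x. (x, y)) -` E)"
      by (rule ergodic_AE_dichotomy[OF assms(5) \<mu>])
    then show ?thesis
      by simp
  qed
  define B where "B = {y. AE x in \<mu>. (x, y) \<in> E}"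
  have "B \<in> sets borel"
    using sets_AE_section[OF E] \<open>space \<nu> = UNIV\<close> sets_\<nu> by (simp add: B_def)
  moreover have "AE y in \<nu>. y \<in> B \<longrightarrow> T y \<in> B"
    using assms(11) unfolding local_contraction_mod_def
  proof (rule eventually_mono, safe)
    fix y assume "dilation_gauge T y \<le> 1" and "y \<in> B"
    then show "T y \<in> B"
      using orbit_approach_image_le[OF s] unfolding B_def E_def
      by (auto elim!: eventually_mono intro: le_less_trans)
  qed
  ultimately have "(AE y in \<nu>. y \<in> B) \<or> (AE y in \<nu>. y \<notin> B)"
    by (rule ergodic_AE_dichotomy_subinvariant[OF assms(6) \<nu>])
  then have "(AE y in \<nu>. AE x in \<mu>. (x, y) \<in> E) \<or> (AE y in \<nu>. AE x in \<mu>. (x, y) \<notin> E)"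
  proof (elim disjE)
    assume "AE y in \<nu>. y \<notin> B"
    then have "AE y in \<nu>. AE x in \<mu>. (x, y) \<notin> E"
      by (rule eventually_mono) (use sections in \<open>auto simp: B_def\<close>)
    then show ?thesis ..
  qed (simp add: B_def)
  from AE_pair_dichotomy[OF E this] show ?thesis
    by (simp add: E_def)
qed

theorem theorem6p5:
  fixes T :: "'a::metric_space \<Rightarrow> 'a"
    and s :: "nat \<Rightarrow> real"
    and \<mu> \<nu> :: "'a measure"
  assumes "separable_space (euclidean :: 'a topology)"
    and "T \<in> borel_measurable borel"
    and "scale_sequence s" and "steady s"
    and "prob_space \<mu>" and "prob_space \<nu>"
    and "invariant_measure T \<mu>" and "invariant_measure T \<nu>"
    and "ergodic_measure T \<mu>" and "ergodic_measure T \<nu>"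
    and "local_contraction_mod T \<nu>"
  shows "\<exists>c :: ereal. AE z in (\<mu> \<Otimes>\<^sub>M \<nu>).
           liminf (\<lambda>n. ereal (s n * dist ((T ^^ n) (fst z)) (snd z))) = c"
proof -
  have "\<exists>c. AE z in \<mu> \<Otimes>\<^sub>M \<nu>. orbit_approach T s (fst z) (snd z) = c"
    by (rule AE_eq_const_if_AE_threshold, rule orbit_approach_AE_threshold) (use assms in auto)
  then show ?thesis
    by (simp add: orbit_approach_def)
qed

end
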